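(* Let $X_1,\ldots,X_n$ be nonnegative random variables with no ties. For every $A\subseteq[n]$ and $k\in[n]$, $$\Pr\Big(X_{k:n}=\min_{i\in A}X_i\Big)=\sum_{B\supseteq A,\ |B|=n-k+1}q(B)-\sum_{B\supseteq A,\ |B|=n-k}q(B),$$ and for any semicoherent structure function $\phi$ on $[n]$ with system lifetime $T$, and every $k\in\{0,\ldots,n\}$ (with $X_{0:n}:=0$... more precisely for $k\in[n]$), $$\Pr(T>X_{k:n})=\sum_{|A|=n-k}q(A)\,\phi(A)=\sum_{A\subseteq[n]}m_\phi(A)\,\Pr\Big(X_{k:n}<\min_{i\in A}X_i\Big).$$
   Context: No ties: $\Pr(X_i=X_k)=0$ for $i\neq k$. $X_{k:n}$ is the $k$th smallest of $X_1,\ldots,X_n$. For $A\subseteq[n]$, $q(A)=\Pr\big(\max_{i\notin A}X_i<\min_{i\in A}X_i\big)$ (empty max $=-\infty$, empty min $=+\infty$), the probability that the $|A|$ longest-lived components are exactly those in $A$. A semicoherent structure function $\phi:2^{[n]}\to\{0,1\}$ (subsets identified with Boolean vectors) is nondecreasing with $\phi(\varnothing)=0$, $\phi([n])=1$; the system lifetime is $T=\inf\{t\geq0:\phi(\{i:X_i>t\})=0\}$. Möbius transform: $m_\phi(A)=\sum_{B\subseteq A}(-1)^{|A|-|B|}\phi(B)$. *)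

theory Defs
  imports "HOL-Probability.Probability"
begin

definition ord_stat :: "nat \<Rightarrow> (nat \<Rightarrow> 'a \<Rightarrow> real) \<Rightarrow> nat \<Rightarrow> 'a \<Rightarrow> real" where
  "ord_stat n X k w = sort (map (\<lambda>i. X i w) [1..<Suc n]) ! (k - 1)"

text \<open>min over A of X i w, with the empty minimum equal to +infinity.\<close>
definition min_on :: "(nat \<Rightarrow> 'a \<Rightarrow> real) \<Rightarrow> nat set \<Rightarrow> 'a \<Rightarrow> ereal" where
  "min_on X A w = Inf ((\<lambda>i. ereal (X i w)) ` A)"

text \<open>max over A of X i w, with the empty maximum equal to -infinity.\<close>
definition max_on :: "(nat \<Rightarrow> 'a \<Rightarrow> real) \<Rightarrow> nat set \<Rightarrow> 'a \<Rightarrow> ereal" where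
  "max_on X A w = Sup ((\<lambda>i. ereal (X i w)) ` A)"

definition qprob :: "'a measure \<Rightarrow> nat \<Rightarrow> (nat \<Rightarrow> 'a \<Rightarrow> real) \<Rightarrow> nat set \<Rightarrow> real" where
  "qprob M n X A = measure M {w \<in> space M. max_on X ({1..n} - A) w < min_on X A w}"

definition semicoherent :: "nat \<Rightarrow> (nat set \<Rightarrow> bool) \<Rightarrow> bool" where
  "semicoherent n \<phi> \<longleftrightarrow>
     (\<forall>A B. A \<subseteq> B \<and> B \<subseteq> {1..n} \<longrightarrow> (\<phi> A \<longrightarrow> \<phi> B)) \<and> \<not> \<phi> {} \<and> \<phi> {1..n}"

definition sys_lifetime :: "nat \<Rightarrow> (nat set \<Rightarrow> bool) \<Rightarrow> (nat \<Rightarrow> 'a \<Rightarrow> real) \<Rightarrow> 'a \<Rightarrow> real" where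
  "sys_lifetime n \<phi> X w = Inf {t. t \<ge> 0 \<and> \<not> \<phi> {i \<in> {1..n}. X i w > t}}"

definition mobius :: "(nat set \<Rightarrow> bool) \<Rightarrow> nat set \<Rightarrow> real" where
  "mobius \<phi> A = (\<Sum>B\<in>Pow A. (-1::real) ^ (card A - card B) * of_bool (\<phi> B))"

end

theory Submission
  imports Defs
begin

(* Almost surely the lifetimes are pairwise distinct. Then for every m there is exactly one set
   of m components outliving all the others, so for any function c on sets the sum of q(B) c(B)
   over |B| = m is the expectation of c at that top set. The components still working after
   the k-th failure, {i. X_{k:n} < X_i}, form the top set of size n - k, and those working just
   before it, {i. X_{k:n} <= X_i}, the top set of size n - k + 1. Now X_{k:n} = min_A X_i exactly
   when A lies in the second set but not in the first, T > X_{k:n} exactly when phi holds on the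
   first, and phi(U) = sum_{A <= U} m_phi(A) by Moebius inversion, where for U the first set
   A <= U means X_{k:n} < min_A X_i. *)

subsection \<open>Order statistics\<close>

lemma sorted_nth_downclosed_iff:
  assumes "sorted xs" "j < length xs" and down: "\<And>x y. P y \<Longrightarrow> x \<le> y \<Longrightarrow> P x"
  shows "P (xs ! j) \<longleftrightarrow> j < length (filter P xs)"
proof
  assume "P (xs ! j)"
  then have "{0..j} \<subseteq> {i. i < length xs \<and> P (xs ! i)}"
    using assms by (auto intro: down simp: sorted_iff_nth_mono)
  then have "card {0..j} \<le> card {i. i < length xs \<and> P (xs ! i)}"
    by (intro card_mono) auto
  then show "j < length (filter P xs)"
    by (simp add: length_filter_conv_card)
next
  assume j: "j < length (filter P xs)"
  show "P (xs ! j)"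
  proof (rule ccontr)
    assume "\<not> P (xs ! j)"
    then have "{i. i < length xs \<and> P (xs ! i)} \<subseteq> {0..<j}"
      using assms by (auto simp: sorted_iff_nth_mono not_less intro: down)
    then have "card {i. i < length xs \<and> P (xs ! i)} \<le> j"
      using card_mono[of "{0..<j}"] by fastforce
    with j show False
      by (simp add: length_filter_conv_card)
  qed
qed

lemma ord_stat_downclosed_iff:
  assumes "k \<in> {1..n}" and down: "\<And>x y. P y \<Longrightarrow> x \<le> y \<Longrightarrow> P x"
  shows "P (ord_stat n X k w) \<longleftrightarrow> k \<le> card {i\<in>{1..n}. P (X i w)}"
proof -
  let ?xs = "map (\<lambda>i. X i w) [1..<Suc n]"
  have "length (filter P (sort ?xs)) = length (filter (P \<circ> (\<lambda>i. X i w)) [1..<Suc n])"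
    by (simp add: filter_sort filter_map del: upt_Suc)
  also have "\<dots> = card {i\<in>{1..n}. P (X i w)}"
    by (subst distinct_card[symmetric]) (auto simp del: upt_Suc intro: arg_cong[where f = card])
  finally have "length (filter P (sort ?xs)) = card {i\<in>{1..n}. P (X i w)}" .
  moreover have "P (sort ?xs ! (k - 1)) \<longleftrightarrow> k - 1 < length (filter P (sort ?xs))"
    using assms by (intro sorted_nth_downclosed_iff) (auto simp del: upt_Suc)
  ultimately show ?thesis
    using assms(1) by (auto simp: ord_stat_def simp del: upt_Suc)
qed

lemma ord_stat_in_values:
  assumes "k \<in> {1..n}"
  shows "\<exists>i\<in>{1..n}. ord_stat n X k w = X i w"
proof -
  let ?xs = "sort (map (\<lambda>i. X i w) [1..<Suc n])"
  have "?xs ! (k - 1) \<in> set ?xs"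
    using assms by (intro nth_mem) (auto simp del: upt_Suc)
  then show ?thesis
    by (auto simp: ord_stat_def simp del: upt_Suc)
qed

lemma card_below_ord_stat:
  assumes k: "k \<in> {1..n}" and inj: "inj_on (\<lambda>i. X i w) {1..n}"
  shows "card {i\<in>{1..n}. X i w \<le> ord_stat n X k w} = k"
    and "card {i\<in>{1..n}. X i w < ord_stat n X k w} = k - 1"
proof -
  define v where "v = ord_stat n X k w"
  define L where "L = {i\<in>{1..n}. X i w < v}"
  define E where "E = {i\<in>{1..n}. X i w \<le> v}"
  have "ord_stat n X k w < v \<longleftrightarrow> k \<le> card L" "ord_stat n X k w \<le> v \<longleftrightarrow> k \<le> card E"
    using ord_stat_downclosed_iff[OF k, of "\<lambda>x. x < v" X w]
      ord_stat_downclosed_iff[OF k, of "\<lambda>x. x \<le> v" X w]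
    unfolding L_def E_def by auto
  then have bounds: "\<not> k \<le> card L" "k \<le> card E"
    by (simp_all add: v_def)
  obtain i0 where i0: "i0 \<in> {1..n}" "X i0 w = v"
    using ord_stat_in_values[OF k, of X w] unfolding v_def by force
  have "E = insert i0 L"
  proof (intro equalityI subsetI)
    fix i
    assume "i \<in> E"
    show "i \<in> insert i0 L"
    proof (cases "X i w < v")
      case False
      with \<open>i \<in> E\<close> i0 have "i \<in> {1..n}" "X i w = X i0 w"
        by (auto simp: E_def)
      then show ?thesis
        using inj_onD[OF inj, of i i0] i0(1) by simp
    qed (use \<open>i \<in> E\<close> in \<open>simp add: L_def E_def\<close>)
  qed (use i0 in \<open>auto simp: L_def E_def\<close>)
  moreover have "i0 \<notin> L"
    using i0 by (simp add: L_def)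
  ultimately have "card E = card L + 1"
    by (simp add: L_def)
  with bounds have "card E = k" "card L = k - 1"
    by linarith+
  then show "card {i\<in>{1..n}. X i w \<le> ord_stat n X k w} = k"
    and "card {i\<in>{1..n}. X i w < ord_stat n X k w} = k - 1"
    by (simp_all add: E_def L_def v_def)
qed

definition alive_after :: "nat \<Rightarrow> (nat \<Rightarrow> 'a \<Rightarrow> real) \<Rightarrow> nat \<Rightarrow> 'a \<Rightarrow> nat set" where
  "alive_after n X k w = {i\<in>{1..n}. ord_stat n X k w < X i w}"

definition alive_before :: "nat \<Rightarrow> (nat \<Rightarrow> 'a \<Rightarrow> real) \<Rightarrow> nat \<Rightarrow> 'a \<Rightarrow> nat set" where
  "alive_before n X k w = {i\<in>{1..n}. ord_stat n X k w \<le> X i w}"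

lemma
  assumes "k \<in> {1..n}" and "inj_on (\<lambda>i. X i w) {1..n}"
  shows card_alive_after: "card (alive_after n X k w) = n - k"
    and card_alive_before: "card (alive_before n X k w) = n - k + 1"
proof -
  have compl: "card ({1..n} - {i\<in>{1..n}. P i}) = n - card {i\<in>{1..n}. P i}" for P
    by (subst card_Diff_subset) auto
  have alive: "alive_after n X k w = {1..n} - {i\<in>{1..n}. X i w \<le> ord_stat n X k w}"
    "alive_before n X k w = {1..n} - {i\<in>{1..n}. X i w < ord_stat n X k w}"
    by (auto simp: alive_after_def alive_before_def)
  show "card (alive_after n X k w) = n - k" "card (alive_before n X k w) = n - k + 1"
    unfolding alive compl card_below_ord_stat[of k n X w, OF assms] using assms(1) by auto
qed

lemma subset_alive_after_iff:
  "A \<subseteq> {1..n} \<Longrightarrow> A \<subseteq> alive_after n X k w \<longleftrightarrow> (\<forall>i\<in>A. ord_stat n X k w < X i w)"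
  and subset_alive_before_iff:
  "A \<subseteq> {1..n} \<Longrightarrow> A \<subseteq> alive_before n X k w \<longleftrightarrow> (\<forall>i\<in>A. ord_stat n X k w \<le> X i w)"
  by (auto simp: alive_after_def alive_before_def)

lemma alive_after_subset: "alive_after n X k w \<subseteq> {1..n}"
  and alive_before_subset: "alive_before n X k w \<subseteq> {1..n}"
  by (auto simp: alive_after_def alive_before_def)

subsection \<open>Top sets\<close>

definition is_top_set :: "nat \<Rightarrow> (nat \<Rightarrow> 'a \<Rightarrow> real) \<Rightarrow> nat set \<Rightarrow> 'a \<Rightarrow> bool" where
  "is_top_set n X B w \<longleftrightarrow> (\<forall>i\<in>B. \<forall>j\<in>{1..n} - B. X j w < X i w)"

lemma is_top_set_upclosed:
  assumes "\<And>x y. P x \<Longrightarrow> x \<le> y \<Longrightarrow> P y"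
  shows "is_top_set n X {i\<in>{1..n}. P (X i w)} w"
  unfolding is_top_set_def
proof (intro ballI)
  fix i j
  assume "i \<in> {i\<in>{1..n}. P (X i w)}" "j \<in> {1..n} - {i\<in>{1..n}. P (X i w)}"
  then have "P (X i w)" "\<not> P (X j w)"
    by auto
  then show "X j w < X i w"
    by (metis assms not_less)
qed

lemma is_top_set_alive_after: "is_top_set n X (alive_after n X k w) w"
  and is_top_set_alive_before: "is_top_set n X (alive_before n X k w) w"
  unfolding alive_after_def alive_before_def
  by (rule is_top_set_upclosed, simp)+

lemma is_top_set_unique:
  assumes "is_top_set n X B w" "is_top_set n X B' w" "B \<subseteq> {1..n}" "B' \<subseteq> {1..n}"
    and "card B = card B'"
  shows "B = B'"
proof -
  have "B \<subseteq> B' \<or> B' \<subseteq> B"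
  proof (rule ccontr)
    assume "\<not> (B \<subseteq> B' \<or> B' \<subseteq> B)"
    then obtain i j where "i \<in> B - B'" "j \<in> B' - B"
      by blast
    with assms(1-4) have "X j w < X i w" "X i w < X j w"
      unfolding is_top_set_def by blast+
    then show False
      by simp
  qed
  moreover have "finite B" "finite B'"
    using assms(3,4) finite_subset by auto
  ultimately show ?thesis
    using assms(5) by (metis card_subset_eq)
qed

lemma sum_is_top_set:
  assumes "T \<subseteq> {1..n}" "is_top_set n X T w"
  shows "(\<Sum>B | B \<subseteq> {1..n} \<and> card B = card T. of_bool (is_top_set n X B w) * c B) = (c T :: real)"
proof -
  have "B = T" if "B \<subseteq> {1..n}" "card B = card T" "is_top_set n X B w" for B
    using is_top_set_unique[OF that(3) assms(2) that(1) assms(1) that(2)] .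
  then have "(\<Sum>B | B \<subseteq> {1..n} \<and> card B = card T. of_bool (is_top_set n X B w) * c B)
      = (\<Sum>B | B \<subseteq> {1..n} \<and> card B = card T. if B = T then c T else 0)"
    using assms by (intro sum.cong refl) auto
  also have "\<dots> = c T"
    using assms(1) by (simp add: finite_subset[of _ "Pow {1..n}"])
  finally show ?thesis .
qed

lemma min_on_eq_Min:
  assumes "finite A" "A \<noteq> {}"
  shows "min_on X A w = ereal (Min ((\<lambda>i. X i w) ` A))"
  using assms by (simp add: min_on_def Min_Inf[symmetric] mono_Min_commute[of ereal] monoI image_image)

lemma max_on_eq_Max:
  assumes "finite A" "A \<noteq> {}"
  shows "max_on X A w = ereal (Max ((\<lambda>i. X i w) ` A))"
  using assms by (simp add: max_on_def Max_Sup[symmetric] mono_Max_commute[of ereal] monoI image_image)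

lemma min_on_empty [simp]: "min_on X {} w = \<infinity>"
  by (simp add: min_on_def top_ereal_def)

lemma max_on_empty [simp]: "max_on X {} w = -\<infinity>"
  by (simp add: max_on_def bot_ereal_def)

lemma max_on_less_min_on_iff:
  assumes "finite B" "finite C"
  shows "max_on X C w < min_on X B w \<longleftrightarrow> (\<forall>i\<in>B. \<forall>j\<in>C. X j w < X i w)"
  using assms
  by (cases "B = {}"; cases "C = {}")
    (auto simp: min_on_eq_Min max_on_eq_Max)

lemma qprob_eq_measure_is_top_set:
  assumes "B \<subseteq> {1..n}"
  shows "qprob M n X B = measure M {w\<in>space M. is_top_set n X B w}"
proof -
  have "finite B"
    using assms finite_subset by blast
  then show ?thesis
    by (simp add: qprob_def is_top_set_def max_on_less_min_on_iff)
qed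

lemma ereal_less_min_on_iff:
  assumes "finite A"
  shows "ereal v < min_on X A w \<longleftrightarrow> (\<forall>i\<in>A. v < X i w)"
  using assms by (cases "A = {}") (auto simp: min_on_eq_Min)

lemma ereal_eq_min_on_iff:
  assumes "finite A"
  shows "ereal v = min_on X A w \<longleftrightarrow> (\<forall>i\<in>A. v \<le> X i w) \<and> \<not> (\<forall>i\<in>A. v < X i w)"
proof (cases "A = {}")
  case False
  define m where "m = Min ((\<lambda>i. X i w) ` A)"
  have "m \<in> (\<lambda>i. X i w) ` A" "\<forall>i\<in>A. m \<le> X i w"
    using assms False by (simp_all add: m_def)
  then have "v = m \<longleftrightarrow> (\<forall>i\<in>A. v \<le> X i w) \<and> (\<exists>i\<in>A. X i w = v)"
    by (auto intro: order.antisym)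
  moreover have "min_on X A w = ereal m"
    using assms False by (simp add: min_on_eq_Min m_def)
  ultimately show ?thesis
    by (force simp: not_less intro: order.antisym)
qed simp

subsection \<open>System lifetime and Moebius inversion\<close>

lemma less_sys_lifetime_iff:
  assumes semi: "semicoherent n \<phi>" and nonneg: "\<forall>i\<in>{1..n}. 0 \<le> X i w" and "0 \<le> v"
  shows "v < sys_lifetime n \<phi> X w \<longleftrightarrow> \<phi> {i\<in>{1..n}. v < X i w}"
proof -
  define U where "U t = {i\<in>{1..n}. t < X i w}" for t
  define S where "S = {t. 0 \<le> t \<and> \<not> \<phi> (U t)}"
  have lifetime: "sys_lifetime n \<phi> X w = Inf S"
    by (simp add: sys_lifetime_def S_def U_def)
  have mono: "\<phi> A \<Longrightarrow> A \<subseteq> U t \<Longrightarrow> \<phi> (U t)" for A t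
    using semi unfolding semicoherent_def U_def by blast
  have not_empty: "\<not> \<phi> {}"
    using semi by (simp add: semicoherent_def)
  define t0 where "t0 = Max (insert 0 ((\<lambda>i. X i w) ` {1..n}))"
  have "U t0 = {}" "0 \<le> t0"
    by (auto simp: U_def t0_def not_less)
  then have "t0 \<in> S"
    using not_empty by (simp add: S_def)
  then have S: "S \<noteq> {}" "bdd_below S"
    by (auto simp: S_def intro: bdd_belowI[of _ 0])
  show ?thesis
    unfolding U_def[symmetric] lifetime
  proof
    assume "v < Inf S"
    then show "\<phi> (U v)"
      using cInf_lower[OF _ S(2), of v] \<open>0 \<le> v\<close> by (auto simp: S_def)
  next
    assume "\<phi> (U v)"
    then have "U v \<noteq> {}"
      using not_empty by auto
    define m where "m = Min ((\<lambda>i. X i w) ` U v)"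
    have "m \<in> (\<lambda>i. X i w) ` U v"
      using \<open>U v \<noteq> {}\<close> by (simp add: m_def U_def)
    then have "v < m"
      by (auto simp: U_def)
    have "m \<le> X i w" if "i \<in> U v" for i
      using that by (simp add: m_def U_def)
    then have subset: "U v \<subseteq> U t" if "t < m" for t
      using that by (force simp: U_def)
    have "m \<le> t" if "t \<in> S" for t
    proof (rule ccontr)
      assume "\<not> m \<le> t"
      then have "\<phi> (U t)"
        using mono[OF \<open>\<phi> (U v)\<close> subset] by simp
      with that show False
        by (simp add: S_def)
    qed
    then have "m \<le> Inf S"
      using S(1) by (rule cInf_greatest[rotated])
    with \<open>v < m\<close> show "v < Inf S"
      by simp
  qed
qed

lemma sum_mobius_Pow:
  assumes "finite S"
  shows "(\<Sum>A\<in>Pow S. mobius \<phi> A) = of_bool (\<phi> S)"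
proof -
  define g where "g A = (-1) ^ card A * mobius \<phi> A" for A
  have sign: "(-1::real) ^ card A * (-1) ^ (card A - card B) = (-1) ^ card B"
    if "finite A" "B \<subseteq> A" for A B :: "nat set"
    using neg_one_power_add_eq_neg_one_power_diff[of "card A - card B" "card A"] card_mono[OF that]
    by (simp flip: power_add)
  have "g A = (\<Sum>B\<in>Pow A. (-1) ^ card B * of_bool (\<phi> B))" if "finite A" for A
    unfolding g_def mobius_def sum_distrib_left
    by (intro sum.cong refl) (simp add: sign that mult.assoc [symmetric])
  then have "of_bool (\<phi> S) = (\<Sum>T\<in>Pow S. (-1) ^ card T * g T)"
    by (rule inclusion_exclusion_symmetric[OF _ assms])
  then show ?thesis
    by (simp add: g_def mult.assoc[symmetric] flip: power_add)
qed

lemma sum_mobius_of_bool_subset: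
  assumes "finite S" "T \<subseteq> S"
  shows "(\<Sum>A\<in>Pow S. mobius \<phi> A * of_bool (A \<subseteq> T)) = of_bool (\<phi> T)"
proof -
  have "(\<Sum>A\<in>Pow S. mobius \<phi> A * of_bool (A \<subseteq> T)) = (\<Sum>A\<in>Pow T. mobius \<phi> A * of_bool (A \<subseteq> T))"
    using assms by (intro sum.mono_neutral_right) auto
  also have "\<dots> = (\<Sum>A\<in>Pow T. mobius \<phi> A)"
    by simp
  also have "\<dots> = of_bool (\<phi> T)"
    using sum_mobius_Pow[OF finite_subset[OF assms(2,1)]] .
  finally show ?thesis .
qed

lemma borel_measurable_of_bool:
  "Measurable.pred M P \<Longrightarrow> (\<lambda>w. of_bool (P w) :: real) \<in> borel_measurable M"
  by measurable

lemma borel_measurable_fun_Collect: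
  fixes f :: "'b set \<Rightarrow> real"
  assumes "finite I" and "\<And>i. i \<in> I \<Longrightarrow> Measurable.pred M (P i)"
  shows "(\<lambda>w. f {i\<in>I. P i w}) \<in> borel_measurable M"
proof -
  have "f {i\<in>I. P i w} = (\<Sum>S\<in>Pow I. of_bool (\<forall>i\<in>I. i \<in> S \<longleftrightarrow> P i w) * f S)" for w
  proof -
    have "(\<Sum>S\<in>Pow I. of_bool (\<forall>i\<in>I. i \<in> S \<longleftrightarrow> P i w) * f S)
        = (\<Sum>S\<in>Pow I. if {i\<in>I. P i w} = S then f S else 0)"
      by (intro sum.cong refl) auto
    then show ?thesis
      using assms(1) by simp
  qed
  moreover have "(\<lambda>w. \<Sum>S\<in>Pow I. of_bool (\<forall>i\<in>I. i \<in> S \<longleftrightarrow> P i w) * f S) \<in> borel_measurable M"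
    using assms by (intro borel_measurable_sum borel_measurable_times borel_measurable_of_bool
        pred_intros_finite(3) pred_intros_logic measurable_const) auto
  ultimately show ?thesis
    by simp
qed

lemma pred_less_borel:
  "f \<in> borel_measurable M \<Longrightarrow> g \<in> borel_measurable M \<Longrightarrow> Measurable.pred M (\<lambda>w. (f w :: real) < g w)"
  unfolding pred_def by (rule borel_measurable_less)

lemma pred_le_borel:
  "f \<in> borel_measurable M \<Longrightarrow> g \<in> borel_measurable M \<Longrightarrow> Measurable.pred M (\<lambda>w. (f w :: real) \<le> g w)"
  unfolding pred_def by (rule borel_measurable_le)

lemma measure_Collect_eq_integral:
  "measure M {w\<in>space M. P w} = (\<integral>w. of_bool (P w) \<partial>M)"
proof -
  have "measure M {w\<in>space M. P w} = (\<integral>w. indicator {w\<in>space M. P w} w \<partial>M)"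
    by (simp add: Int_absorb2)
  also have "\<dots> = (\<integral>w. of_bool (P w) \<partial>M)"
    by (intro Bochner_Integration.integral_cong) (auto simp: indicator_def)
  finally show ?thesis .
qed

lemma (in finite_measure) integrable_of_bool:
  "Measurable.pred M P \<Longrightarrow> integrable M (\<lambda>w. of_bool (P w) :: real)"
  by (intro integrable_const_bound[where B = 1] borel_measurable_of_bool) auto

locale no_ties_lifetimes = prob_space M for M :: "'a measure" +
  fixes n :: nat and X :: "nat \<Rightarrow> 'a \<Rightarrow> real"
  assumes borel_measurable_X: "i \<in> {1..n} \<Longrightarrow> X i \<in> borel_measurable M"
    and no_ties: "i \<in> {1..n} \<Longrightarrow> j \<in> {1..n} \<Longrightarrow> i \<noteq> j \<Longrightarrow>
      measure M {w \<in> space M. X i w = X j w} = 0"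
begin

lemma AE_inj_on: "AE w in M. inj_on (\<lambda>i. X i w) {1..n}"
proof -
  have "AE w in M. X i w \<noteq> X j w" if "i \<in> {1..n}" "j \<in> {1..n}" "i \<noteq> j" for i j
    using no_ties[OF that] that
    by (subst AE_iff_measurable[OF borel_measurable_eq[OF borel_measurable_X borel_measurable_X]])
      (auto simp: emeasure_eq_measure)
  then have "AE w in M. \<forall>i\<in>{1..n}. \<forall>j\<in>{1..n}. i \<noteq> j \<longrightarrow> X i w \<noteq> X j w"
    by (simp add: AE_finite_all)
  then show ?thesis
    by eventually_elim (auto simp: inj_on_def)
qed

lemma borel_measurable_ord_stat:
  assumes "k \<in> {1..n}"
  shows "ord_stat n X k \<in> borel_measurable M"
proof (rule borel_measurableI_less)
  fix a :: real
  have "\<And>x y. y < a \<Longrightarrow> x \<le> y \<Longrightarrow> x < a"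
    by simp
  then have below: "ord_stat n X k w < a \<longleftrightarrow> k \<le> card {i\<in>{1..n}. X i w < a}" for w
    by (rule ord_stat_downclosed_iff[OF assms])
  have "Measurable.pred M (\<lambda>w. X i w < a)" if "i \<in> {1..n}" for i
    using borel_measurable_X[OF that] borel_measurable_const by (rule pred_less_borel)
  then have "(\<lambda>w. real (card {i\<in>{1..n}. X i w < a})) \<in> borel_measurable M"
    by (rule borel_measurable_fun_Collect[OF finite_atLeastAtMost])
  then have "Measurable.pred M (\<lambda>w. real k \<le> real (card {i\<in>{1..n}. X i w < a}))"
    by (rule pred_le_borel[OF borel_measurable_const])
  then show "{w \<in> space M. ord_stat n X k w < a} \<in> sets M"
    unfolding pred_def of_nat_le_iff below .
qed

lemma pred_is_top_set:
  assumes "B \<subseteq> {1..n}"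
  shows "Measurable.pred M (is_top_set n X B)"
proof -
  have "Measurable.pred M (\<lambda>w. X j w < X i w)" if "i \<in> B" "j \<in> {1..n} - B" for i j
    using borel_measurable_X[of j] borel_measurable_X[of i] that assms
    by (intro pred_less_borel) auto
  then show ?thesis
    unfolding is_top_set_def using finite_subset[OF assms]
    by (intro pred_intros_finite(3)) auto
qed

lemma
  fixes f :: "nat set \<Rightarrow> real"
  assumes "k \<in> {1..n}"
  shows borel_measurable_alive_after: "(\<lambda>w. f (alive_after n X k w)) \<in> borel_measurable M"
    and borel_measurable_alive_before: "(\<lambda>w. f (alive_before n X k w)) \<in> borel_measurable M"
proof -
  have after: "Measurable.pred M (\<lambda>w. ord_stat n X k w < X i w)" if "i \<in> {1..n}" for i
    using borel_measurable_ord_stat[OF assms] borel_measurable_X[OF that] by (rule pred_less_borel)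
  have before: "Measurable.pred M (\<lambda>w. ord_stat n X k w \<le> X i w)" if "i \<in> {1..n}" for i
    using borel_measurable_ord_stat[OF assms] borel_measurable_X[OF that] by (rule pred_le_borel)
  show "(\<lambda>w. f (alive_after n X k w)) \<in> borel_measurable M"
    unfolding alive_after_def using after by (rule borel_measurable_fun_Collect[OF finite_atLeastAtMost])
  show "(\<lambda>w. f (alive_before n X k w)) \<in> borel_measurable M"
    unfolding alive_before_def using before by (rule borel_measurable_fun_Collect[OF finite_atLeastAtMost])
qed

lemma sum_qprob_eq_integral:
  assumes top: "AE w in M. T w \<subseteq> {1..n} \<and> is_top_set n X (T w) w \<and> card (T w) = m"
    and "(\<lambda>w. c (T w)) \<in> borel_measurable M"
  shows "(\<Sum>B | B \<subseteq> {1..n} \<and> card B = m. qprob M n X B * c B) = (\<integral>w. c (T w) \<partial>M)"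
proof -
  let ?F = "{B. B \<subseteq> {1..n} \<and> card B = m}"
  let ?top = "\<lambda>w. \<Sum>B\<in>?F. of_bool (is_top_set n X B w) * c B"
  have "qprob M n X B * c B = (\<integral>w. of_bool (is_top_set n X B w) * c B \<partial>M)" if "B \<in> ?F" for B
    using that by (simp add: qprob_eq_measure_is_top_set measure_Collect_eq_integral)
  then have "(\<Sum>B\<in>?F. qprob M n X B * c B) = (\<Sum>B\<in>?F. \<integral>w. of_bool (is_top_set n X B w) * c B \<partial>M)"
    by (rule sum.cong[OF refl])
  also have "\<dots> = (\<integral>w. ?top w \<partial>M)"
    by (rule Bochner_Integration.integral_sum[symmetric])
      (auto intro!: integrable_of_bool pred_is_top_set)
  also have "\<dots> = (\<integral>w. c (T w) \<partial>M)"
  proof (rule integral_cong_AE)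
    show "?top \<in> borel_measurable M"
      by (intro borel_measurable_sum borel_measurable_times borel_measurable_of_bool
          pred_is_top_set borel_measurable_const) auto
    show "AE w in M. ?top w = c (T w)"
      using top by eventually_elim (use sum_is_top_set in auto)
  qed fact
  finally show ?thesis .
qed

lemma
  assumes "k \<in> {1..n}"
  shows sum_qprob_alive_after:
      "(\<Sum>B | B \<subseteq> {1..n} \<and> card B = n - k. qprob M n X B * c B) = (\<integral>w. c (alive_after n X k w) \<partial>M)"
    and sum_qprob_alive_before:
      "(\<Sum>B | B \<subseteq> {1..n} \<and> card B = n - k + 1. qprob M n X B * c B)
        = (\<integral>w. c (alive_before n X k w) \<partial>M)"
proof -
  have after: "AE w in M. alive_after n X k w \<subseteq> {1..n} \<and> is_top_set n X (alive_after n X k w) w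
      \<and> card (alive_after n X k w) = n - k"
    using AE_inj_on
    by eventually_elim (intro conjI alive_after_subset is_top_set_alive_after card_alive_after assms)
  have before: "AE w in M. alive_before n X k w \<subseteq> {1..n} \<and> is_top_set n X (alive_before n X k w) w
      \<and> card (alive_before n X k w) = n - k + 1"
    using AE_inj_on
    by eventually_elim (intro conjI alive_before_subset is_top_set_alive_before card_alive_before assms)
  show "(\<Sum>B | B \<subseteq> {1..n} \<and> card B = n - k. qprob M n X B * c B)
      = (\<integral>w. c (alive_after n X k w) \<partial>M)"
    by (rule sum_qprob_eq_integral[OF after borel_measurable_alive_after[OF assms]])
  show "(\<Sum>B | B \<subseteq> {1..n} \<and> card B = n - k + 1. qprob M n X B * c B)
      = (\<integral>w. c (alive_before n X k w) \<partial>M)"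
    by (rule sum_qprob_eq_integral[OF before borel_measurable_alive_before[OF assms]])
qed

lemma prob_ord_stat_eq_min_on:
  assumes A: "A \<subseteq> {1..n}" and k: "k \<in> {1..n}"
  shows "measure M {w \<in> space M. ereal (ord_stat n X k w) = min_on X A w}
    = (\<Sum>B | A \<subseteq> B \<and> B \<subseteq> {1..n} \<and> card B = n - k + 1. qprob M n X B)
      - (\<Sum>B | A \<subseteq> B \<and> B \<subseteq> {1..n} \<and> card B = n - k. qprob M n X B)"
proof -
  let ?before = "\<lambda>w. of_bool (A \<subseteq> alive_before n X k w) :: real"
  let ?after = "\<lambda>w. of_bool (A \<subseteq> alive_after n X k w) :: real"
  have supersets: "(\<Sum>B | A \<subseteq> B \<and> B \<subseteq> {1..n} \<and> card B = m. qprob M n X B)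
      = (\<Sum>B | B \<subseteq> {1..n} \<and> card B = m. qprob M n X B * of_bool (A \<subseteq> B))" for m
  proof -
    have "finite {B. B \<subseteq> {1..n} \<and> card B = m}"
      by (rule finite_subset[of _ "Pow {1..n}"]) auto
    then have "(\<Sum>B | B \<subseteq> {1..n} \<and> card B = m. qprob M n X B * of_bool (A \<subseteq> B))
        = (\<Sum>B | A \<subseteq> B \<and> B \<subseteq> {1..n} \<and> card B = m. qprob M n X B * of_bool (A \<subseteq> B))"
      by (intro sum.mono_neutral_right) auto
    then show ?thesis
      by simp
  qed
  have "ereal (ord_stat n X k w) = min_on X A w \<longleftrightarrow>
      A \<subseteq> alive_before n X k w \<and> \<not> A \<subseteq> alive_after n X k w" for w
    using A finite_subset[OF A]
    by (simp add: ereal_eq_min_on_iff subset_alive_after_iff subset_alive_before_iff)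
  moreover have "A \<subseteq> alive_after n X k w \<Longrightarrow> A \<subseteq> alive_before n X k w" for w
    by (auto simp: alive_after_def alive_before_def)
  ultimately have "measure M {w \<in> space M. ereal (ord_stat n X k w) = min_on X A w}
      = (\<integral>w. ?before w - ?after w \<partial>M)"
    by (auto simp: measure_Collect_eq_integral intro!: Bochner_Integration.integral_cong)
  also have "\<dots> = (\<integral>w. ?before w \<partial>M) - (\<integral>w. ?after w \<partial>M)"
    by (intro Bochner_Integration.integral_diff integrable_const_bound[where B = 1]
        borel_measurable_alive_before borel_measurable_alive_after k) auto
  finally show ?thesis
    unfolding supersets sum_qprob_alive_before[OF k] sum_qprob_alive_after[OF k] .
qed

lemma prob_sys_lifetime_greater_ord_stat:
  assumes k: "k \<in> {1..n}" and semi: "semicoherent n \<phi>"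
    and nonneg: "\<And>i w. i \<in> {1..n} \<Longrightarrow> w \<in> space M \<Longrightarrow> 0 \<le> X i w"
  shows "measure M {w \<in> space M. sys_lifetime n \<phi> X w > ord_stat n X k w}
    = (\<Sum>A | A \<subseteq> {1..n} \<and> card A = n - k. qprob M n X A * of_bool (\<phi> A))"
proof -
  have "ord_stat n X k w < sys_lifetime n \<phi> X w \<longleftrightarrow> \<phi> (alive_after n X k w)"
    if w: "w \<in> space M" for w
  proof -
    obtain i where i: "i \<in> {1..n}" "ord_stat n X k w = X i w"
      using ord_stat_in_values[OF k, of X w] by blast
    have "\<forall>i\<in>{1..n}. 0 \<le> X i w"
      using nonneg w by blast
    moreover have "0 \<le> ord_stat n X k w"
      using nonneg[OF i(1) w] i(2) by simp
    ultimately show ?thesis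
      unfolding alive_after_def by (rule less_sys_lifetime_iff[OF semi])
  qed
  then have "{w \<in> space M. sys_lifetime n \<phi> X w > ord_stat n X k w}
      = {w \<in> space M. \<phi> (alive_after n X k w)}"
    by blast
  also have "measure M \<dots> = (\<integral>w. of_bool (\<phi> (alive_after n X k w)) \<partial>M)"
    by (rule measure_Collect_eq_integral)
  also have "\<dots> = (\<Sum>A | A \<subseteq> {1..n} \<and> card A = n - k. qprob M n X A * of_bool (\<phi> A))"
    by (rule sum_qprob_alive_after[OF k, symmetric])
  finally show ?thesis .
qed

lemma sum_mobius_prob_less_min_on:
  assumes k: "k \<in> {1..n}"
  shows "(\<Sum>A\<in>Pow {1..n}. mobius \<phi> A *
        measure M {w \<in> space M. ereal (ord_stat n X k w) < min_on X A w})
    = (\<Sum>A | A \<subseteq> {1..n} \<and> card A = n - k. qprob M n X A * of_bool (\<phi> A))"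
proof -
  have "measure M {w \<in> space M. ereal (ord_stat n X k w) < min_on X A w}
      = (\<integral>w. of_bool (A \<subseteq> alive_after n X k w) \<partial>M)" if "A \<in> Pow {1..n}" for A
    using that finite_subset[of A "{1..n}"]
    by (auto simp: measure_Collect_eq_integral ereal_less_min_on_iff subset_alive_after_iff
        intro!: Bochner_Integration.integral_cong)
  then have "(\<Sum>A\<in>Pow {1..n}. mobius \<phi> A *
        measure M {w \<in> space M. ereal (ord_stat n X k w) < min_on X A w})
      = (\<Sum>A\<in>Pow {1..n}. \<integral>w. mobius \<phi> A * of_bool (A \<subseteq> alive_after n X k w) \<partial>M)"
    by (intro sum.cong refl) simp
  also have "\<dots> = (\<integral>w. (\<Sum>A\<in>Pow {1..n}. mobius \<phi> A * of_bool (A \<subseteq> alive_after n X k w)) \<partial>M)"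
    by (intro Bochner_Integration.integral_sum[symmetric] integrable_mult_right
        integrable_const_bound[where B = 1] borel_measurable_alive_after k) auto
  also have "\<dots> = (\<integral>w. of_bool (\<phi> (alive_after n X k w)) \<partial>M)"
    by (simp only: sum_mobius_of_bool_subset[OF finite_atLeastAtMost alive_after_subset])
  finally show ?thesis
    using sum_qprob_alive_after[OF k, of "\<lambda>A. of_bool (\<phi> A)"] by simp
qed

end

theorem mainTheorem6:
  fixes M :: "'a measure" and n :: nat and X :: "nat \<Rightarrow> 'a \<Rightarrow> real"
    and \<phi> :: "nat set \<Rightarrow> bool"
  assumes "prob_space M"
    and rv: "\<And>i. i \<in> {1..n} \<Longrightarrow> X i \<in> borel_measurable M"
    and nonneg: "\<And>i w. i \<in> {1..n} \<Longrightarrow> w \<in> space M \<Longrightarrow> X i w \<ge> 0"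
    and no_ties: "\<And>i j. i \<in> {1..n} \<Longrightarrow> j \<in> {1..n} \<Longrightarrow> i \<noteq> j \<Longrightarrow>
                     measure M {w \<in> space M. X i w = X j w} = 0"
    and semi: "semicoherent n \<phi>"
  shows "(\<forall>A k. A \<subseteq> {1..n} \<longrightarrow> k \<in> {1..n} \<longrightarrow>
            measure M {w \<in> space M. ereal (ord_stat n X k w) = min_on X A w}
            = (\<Sum>B | A \<subseteq> B \<and> B \<subseteq> {1..n} \<and> card B = n - k + 1. qprob M n X B)
              - (\<Sum>B | A \<subseteq> B \<and> B \<subseteq> {1..n} \<and> card B = n - k. qprob M n X B))
       \<and> (\<forall>k \<in> {1..n}.
            measure M {w \<in> space M. sys_lifetime n \<phi> X w > ord_stat n X k w}
              = (\<Sum>A | A \<subseteq> {1..n} \<and> card A = n - k. qprob M n X A * of_bool (\<phi> A))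
          \<and> (\<Sum>A | A \<subseteq> {1..n} \<and> card A = n - k. qprob M n X A * of_bool (\<phi> A))
              = (\<Sum>A\<in>Pow {1..n}. mobius \<phi> A *
                   measure M {w \<in> space M. ereal (ord_stat n X k w) < min_on X A w}))"
proof -
  interpret no_ties_lifetimes M n X
    using assms(1) rv no_ties by (intro no_ties_lifetimes.intro no_ties_lifetimes_axioms.intro)
  show ?thesis
    by (intro conjI allI impI ballI prob_ord_stat_eq_min_on sum_mobius_prob_less_min_on[symmetric]
        prob_sys_lifetime_greater_ord_stat[OF _ semi nonneg])
qed

end
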